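(* Let $G\subset\mathrm{Diff}^1_+(\mathbb{S}^2)$ be a sharply $3$-transitive group containing the rotation group $\mathrm{Rot}(\mathbb{S}^2)$. Then every $g\in G_2$ is conformal at the poles $\mathbf{0}$ and $\mathbf{\infty}$, i.e. $Dg(\mathbf{0})$ and $Dg(\mathbf{\infty})$ are conformal linear maps (positive multiples of rotations).
   Context: $\mathrm{Diff}^1_+(\mathbb{S}^2)$ is the group of orientation-preserving $C^1$ diffeomorphisms of the unit sphere; $\mathrm{Rot}(\mathbb{S}^2)=SO(3)$ acting on $\mathbb{S}^2$. $\mathbb{S}^2$ is identified with $\mathbb{C}\cup\{\infty\}$ by stereographic projection from the North Pole $\mathbf{\infty}$; $\mathbf{0}$ is the South Pole. $G_2=\{g\in G: g(\mathbf{0})=\mathbf{0},\ g(\mathbf{\infty})=\mathbf{\infty}\}$. $G$ is sharply $3$-transitive if any triple of distinct points can be mapped onto any other triple of distinct points by an element of $G$, and the only element of $G$ fixing each point of a triple of distinct points is the identity. *)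

theory Defs
  imports "HOL-Analysis.Analysis"
begin

definition S2 :: "(real^3) set" where
  "S2 = sphere 0 1"

text \<open>North pole (the point at infinity under stereographic projection) and South pole (the point 0).\<close>
definition north_pole :: "real^3" where
  "north_pole = axis 3 1"

definition south_pole :: "real^3" where
  "south_pole = axis 3 (-1)"

text \<open>Radial extension of a map of the sphere to R^3 minus the origin; a map of S2 is C^1
  iff its radial extension is C^1 on R^3 - {0}, and the derivative of the radial
  extension at p in S2, restricted to the tangent plane p-perp, is the tangent map Dg(p).\<close>
definition rext :: "(real^3 \<Rightarrow> real^3) \<Rightarrow> real^3 \<Rightarrow> real^3" where
  "rext f = (\<lambda>x. f (x /\<^sub>R norm x))"

definition C1_S2 :: "(real^3 \<Rightarrow> real^3) \<Rightarrow> bool" where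
  "C1_S2 f \<longleftrightarrow> f ` S2 \<subseteq> S2 \<and>
     (\<exists>D :: real^3 \<Rightarrow> real^3^3.
        (\<forall>x. x \<noteq> 0 \<longrightarrow> (rext f has_derivative (\<lambda>h. D x *v h)) (at x))
        \<and> continuous_on (- {0}) D)"

text \<open>Orientation preserving: the tangent map sends positively oriented tangent bases
  (w.r.t. the outward normal) to positively oriented tangent bases.\<close>
definition orientation_preserving_S2 :: "(real^3 \<Rightarrow> real^3) \<Rightarrow> bool" where
  "orientation_preserving_S2 g \<longleftrightarrow>
     (\<forall>p\<in>S2. \<forall>u v L. u \<bullet> p = 0 \<and> v \<bullet> p = 0 \<and> det (vector [p, u, v] :: real^3^3) > 0
        \<and> (rext g has_derivative L) (at p)
        \<longrightarrow> det (vector [g p, L u, L v] :: real^3^3) > 0)"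

text \<open>Orientation-preserving C^1 diffeomorphisms of S2 (only values on S2 matter).\<close>
definition Diff1_plus_S2 :: "(real^3 \<Rightarrow> real^3) set" where
  "Diff1_plus_S2 = {g. bij_betw g S2 S2 \<and> C1_S2 g \<and> C1_S2 (inv_into S2 g)
                        \<and> orientation_preserving_S2 g}"

text \<open>G is a group of maps of S2 under composition (maps identified when equal on S2).\<close>
definition group_on_S2 :: "(real^3 \<Rightarrow> real^3) set \<Rightarrow> bool" where
  "group_on_S2 G \<longleftrightarrow>
     (\<exists>e\<in>G. \<forall>x\<in>S2. e x = x) \<and>
     (\<forall>g\<in>G. \<forall>h\<in>G. \<exists>k\<in>G. \<forall>x\<in>S2. k x = g (h x)) \<and>
     (\<forall>g\<in>G. \<exists>k\<in>G. \<forall>x\<in>S2. k (g x) = x \<and> g (k x) = x)"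

definition contains_rotations :: "(real^3 \<Rightarrow> real^3) set \<Rightarrow> bool" where
  "contains_rotations G \<longleftrightarrow>
     (\<forall>A :: real^3^3. orthogonal_matrix A \<and> det A = 1 \<longrightarrow>
        (\<exists>g\<in>G. \<forall>x\<in>S2. g x = A *v x))"

definition sharply_3_transitive_S2 :: "(real^3 \<Rightarrow> real^3) set \<Rightarrow> bool" where
  "sharply_3_transitive_S2 G \<longleftrightarrow>
     (\<forall>x1\<in>S2. \<forall>x2\<in>S2. \<forall>x3\<in>S2. \<forall>y1\<in>S2. \<forall>y2\<in>S2. \<forall>y3\<in>S2.
        x1 \<noteq> x2 \<and> x1 \<noteq> x3 \<and> x2 \<noteq> x3 \<and> y1 \<noteq> y2 \<and> y1 \<noteq> y3 \<and> y2 \<noteq> y3 \<longrightarrow>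
        (\<exists>g\<in>G. g x1 = y1 \<and> g x2 = y2 \<and> g x3 = y3)) \<and>
     (\<forall>g\<in>G. \<forall>x1\<in>S2. \<forall>x2\<in>S2. \<forall>x3\<in>S2.
        x1 \<noteq> x2 \<and> x1 \<noteq> x3 \<and> x2 \<noteq> x3 \<and> g x1 = x1 \<and> g x2 = x2 \<and> g x3 = x3 \<longrightarrow>
        (\<forall>x\<in>S2. g x = x))"

text \<open>At a pole p, the tangent plane is spanned by e1 = axis 1 1, e2 = axis 2 1.
  A linear map L is conformal there if its restriction to the tangent plane is a
  positive multiple of a rotation.\<close>
definition conformal_at_pole :: "(real^3 \<Rightarrow> real^3) \<Rightarrow> bool" where
  "conformal_at_pole L \<longleftrightarrow>
     (\<exists>c>0. \<exists>\<theta>::real.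
        L (axis 1 1) = c *\<^sub>R (cos \<theta> *\<^sub>R axis 1 1 + sin \<theta> *\<^sub>R axis 2 1) \<and>
        L (axis 2 1) = c *\<^sub>R ((- sin \<theta>) *\<^sub>R axis 1 1 + cos \<theta> *\<^sub>R axis 2 1))"

end

theory Submission
  imports Defs
begin

text \<open>Let \<open>g\<close> fix both poles, let \<open>p\<close> be one of them and \<open>L = Dg(p)\<close>; \<open>L\<close> preserves the
  horizontal tangent plane. Let \<open>R\<close> be the quarter turn about the polar axis and suppose
  \<open>|L(Rv)| \<noteq> |Lv|\<close> for a horizontal \<open>v\<close>. The elements \<open>g \<circ> R\<close> and \<open>R \<circ> g\<close> of \<open>G\<close> fix the poles and
  have derivatives \<open>LR\<close> and \<open>RL\<close> at \<open>p\<close>, so near \<open>p\<close> the difference of their distances from \<open>p\<close>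
  along the direction \<open>v\<close> has the opposite sign of that along \<open>Rv\<close>. By the intermediate value
  theorem on a small circle around \<open>p\<close> they send some point \<open>x\<close> off the poles to the same circle of
  latitude; a rotation \<open>R\<^sub>t\<close> about the axis aligns the two images of \<open>x\<close>, and by sharp
  3-transitivity (the fixed points \<open>x\<close> and the two poles) \<open>R \<circ> g = R\<^sub>t \<circ> g \<circ> R\<close> everywhere.
  Differentiating at \<open>p\<close> gives \<open>|Lv| = |L(Rv)|\<close>, a contradiction. Applied to \<open>e\<^sub>1\<close> and \<open>e\<^sub>1 + e\<^sub>2\<close>
  this shows that \<open>Le\<^sub>1, Le\<^sub>2\<close> are orthogonal of equal length, and orientation preservation
  makes \<open>L\<close> a positive multiple of a rotation.\<close>

lemma norm_power2_vec3: "(norm (x::real^3))\<^sup>2 = (x$1)\<^sup>2 + (x$2)\<^sup>2 + (x$3)\<^sup>2"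
  using dot_square_norm[of x] by (simp add: inner_vec_def sum_3 power2_eq_square)

lemma inner_vec3: "(x::real^3) \<bullet> y = x$1 * y$1 + x$2 * y$2 + x$3 * y$3"
  by (simp add: inner_vec_def sum_3)

lemma det_vector_axis_column:
  "p$1 = 0 \<Longrightarrow> p$2 = 0 \<Longrightarrow> det (vector [p, u, w] :: real^3^3) = p$3 * (u$1 * w$2 - u$2 * w$1)"
  by (simp add: det_3 algebra_simps)

definition rot_z :: "real \<Rightarrow> real^3^3" where
  "rot_z t = vector [vector [cos t, - sin t, 0], vector [sin t, cos t, 0], vector [0, 0, 1]]"

lemma rot_z_apply [simp]:
  "(rot_z t *v x)$1 = cos t * x$1 - sin t * x$2"
  "(rot_z t *v x)$2 = sin t * x$1 + cos t * x$2"
  "(rot_z t *v x)$3 = x$3"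
  by (simp_all add: rot_z_def matrix_vector_mult_def sum_3)

lemma orthogonal_matrix_rot_z: "orthogonal_matrix (rot_z t)"
  unfolding orthogonal_matrix_def
  by (simp add: rot_z_def vec_eq_iff matrix_matrix_mult_def transpose_def mat_def forall_3 sum_3
      algebra_simps)

lemma det_rot_z: "det (rot_z t) = 1"
  by (simp add: rot_z_def det_3 algebra_simps)

lemma norm_rot_z [simp]: "norm (rot_z t *v x) = norm x"
proof -
  have "\<And>a b c s::real. (c * a - s * b)\<^sup>2 + (s * a + c * b)\<^sup>2 = (s\<^sup>2 + c\<^sup>2) * (a\<^sup>2 + b\<^sup>2)"
    by (simp add: power2_eq_square algebra_simps)
  then have "(norm (rot_z t *v x))\<^sup>2 = (norm x)\<^sup>2"
    by (simp add: norm_power2_vec3)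
  then show ?thesis by (simp add: power2_eq_iff_nonneg)
qed

lemma rot_z_fixes_axis: "x$1 = 0 \<Longrightarrow> x$2 = 0 \<Longrightarrow> rot_z t *v x = x"
  by (simp add: vec_eq_iff forall_3)

lemma rot_z_0: "rot_z 0 *v v = v"
  by (simp add: vec_eq_iff forall_3)

lemma rot_z_quarter_turn_twice: "v$3 = 0 \<Longrightarrow> rot_z (pi/2) *v (rot_z (pi/2) *v v) = - v"
  by (simp add: vec_eq_iff forall_3)

lemma rot_z_horizontal:
  "v$3 = 0 \<Longrightarrow> rot_z t *v v = cos t *\<^sub>R v + sin t *\<^sub>R (rot_z (pi/2) *v v)"
  by (simp add: vec_eq_iff forall_3 algebra_simps)

lemma rot_z_transitive_on_latitudes:
  fixes u w :: "real^3"
  assumes norm: "norm u = norm w" and height: "u$3 = w$3"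
  shows "\<exists>t. rot_z t *v u = w"
proof -
  define r where "r = (u$1)\<^sup>2 + (u$2)\<^sup>2"
  have rw: "(w$1)\<^sup>2 + (w$2)\<^sup>2 = r"
    using arg_cong[OF norm, of power2] height by (simp add: norm_power2_vec3 r_def)
  show ?thesis
  proof (cases "r = 0")
    case True
    then have "u$1 = 0" "u$2 = 0" "w$1 = 0" "w$2 = 0"
      using rw by (simp_all add: r_def sum_power2_eq_zero_iff)
    then have "rot_z 0 *v u = w" using height by (simp add: vec_eq_iff forall_3)
    then show ?thesis ..
  next
    case False
    then have r: "r > 0" by (simp add: r_def order_le_neq_trans)
    define c where "c = (u$1 * w$1 + u$2 * w$2) / r"
    define s where "s = (u$1 * w$2 - u$2 * w$1) / r"
    have "c\<^sup>2 + s\<^sup>2 = ((u$1 * w$1 + u$2 * w$2)\<^sup>2 + (u$1 * w$2 - u$2 * w$1)\<^sup>2) / r\<^sup>2"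
      by (simp only: c_def s_def power_divide add_divide_distrib[symmetric])
    also have "(u$1 * w$1 + u$2 * w$2)\<^sup>2 + (u$1 * w$2 - u$2 * w$1)\<^sup>2
        = ((u$1)\<^sup>2 + (u$2)\<^sup>2) * ((w$1)\<^sup>2 + (w$2)\<^sup>2)"
      by (simp add: power2_eq_square algebra_simps)
    also have "\<dots> = r\<^sup>2" using rw by (simp add: r_def power2_eq_square)
    finally have "c\<^sup>2 + s\<^sup>2 = 1" using r by simp
    then obtain t where t: "c = cos t" "s = sin t" by (metis sincos_total_2pi)
    have "c * u$1 - s * u$2 = ((u$1 * w$1 + u$2 * w$2) * u$1 - (u$1 * w$2 - u$2 * w$1) * u$2) / r"
      using r by (simp add: c_def s_def field_simps)
    also have "\<dots> = w$1 * r / r" by (simp add: r_def power2_eq_square algebra_simps)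
    also have "\<dots> = w$1" using r by simp
    finally have 1: "c * u$1 - s * u$2 = w$1" .
    have "s * u$1 + c * u$2 = ((u$1 * w$2 - u$2 * w$1) * u$1 + (u$1 * w$1 + u$2 * w$2) * u$2) / r"
      using r by (simp add: c_def s_def field_simps)
    also have "\<dots> = w$2 * r / r" by (simp add: r_def power2_eq_square algebra_simps)
    also have "\<dots> = w$2" using r by simp
    finally have 2: "s * u$1 + c * u$2 = w$2" .
    have "rot_z t *v u = w" using height t 1 2 by (simp add: vec_eq_iff forall_3)
    then show ?thesis ..
  qed
qed

lemma mem_S2_iff: "x \<in> S2 \<longleftrightarrow> (x$1)\<^sup>2 + (x$2)\<^sup>2 + (x$3)\<^sup>2 = 1"
proof -
  have "x \<in> S2 \<longleftrightarrow> (norm x)\<^sup>2 = 1"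
    using norm_ge_zero[of x] unfolding S2_def mem_sphere_0 by (smt (verit) power2_eq_1_iff)
  then show ?thesis by (simp add: norm_power2_vec3)
qed

lemma pole_coordinates:
  assumes "p \<in> {south_pole, north_pole}"
  shows "p$1 = 0" "p$2 = 0" "p$3 = 1 \<or> p$3 = -1"
  using assms by (auto simp: south_pole_def north_pole_def axis_def)

lemma south_pole_neq_north_pole: "south_pole \<noteq> north_pole"
  by (simp add: south_pole_def north_pole_def vec_eq_iff axis_def)

lemma pole_in_S2: "p \<in> {south_pole, north_pole} \<Longrightarrow> p \<in> S2"
  using pole_coordinates[of p] by (auto simp: mem_S2_iff)

lemma norm_pole: "p \<in> {south_pole, north_pole} \<Longrightarrow> norm p = 1"
  using pole_in_S2 by (simp add: S2_def)

lemma rot_z_fixes_pole: "p \<in> {south_pole, north_pole} \<Longrightarrow> rot_z t *v p = p"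
  using pole_coordinates by (blast intro: rot_z_fixes_axis)

lemma not_pole_if_off_axis: "x$1 \<noteq> 0 \<or> x$2 \<noteq> 0 \<Longrightarrow> x \<notin> {south_pole, north_pole}"
  using pole_coordinates by blast

lemma pole_plus_horizontal_nonzero:
  assumes "p \<in> {south_pole, north_pole}" "w$3 = 0"
  shows "p + w \<noteq> 0"
proof -
  have "(p + w)$3 \<noteq> 0" using assms(2) pole_coordinates(3)[OF assms(1)] by auto
  then show ?thesis by (metis zero_index)
qed

lemma normalize_pole_plus_horizontal_not_pole:
  assumes p: "p \<in> {south_pole, north_pole}" and w: "w$3 = 0" "w \<noteq> 0"
  shows "(p + w) /\<^sub>R norm (p + w) \<notin> {south_pole, north_pole}"
proof -
  have "w$1 \<noteq> 0 \<or> w$2 \<noteq> 0" using w by (auto simp: vec_eq_iff forall_3)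
  moreover have "inverse (norm (p + w)) \<noteq> 0"
    using pole_plus_horizontal_nonzero[OF p w(1)] by simp
  ultimately show ?thesis
    using not_pole_if_off_axis pole_coordinates(1,2)[OF p] by auto
qed

lemma norm_diff_pole_power2:
  assumes p: "p \<in> {south_pole, north_pole}" and u: "u \<in> S2"
  shows "(norm (u - p))\<^sup>2 = 2 - 2 * p$3 * u$3"
  using pole_coordinates[OF p] u unfolding norm_power2_vec3 mem_S2_iff
  by (auto simp: power2_eq_square algebra_simps)

lemma height_eq_if_equidistant_from_pole:
  assumes "p \<in> {south_pole, north_pole}" "u \<in> S2" "w \<in> S2" "norm (u - p) = norm (w - p)"
  shows "u$3 = w$3"
  using assms norm_diff_pole_power2[of p u] norm_diff_pole_power2[of p w] pole_coordinates(3)[of p]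
  by auto

lemma rext_eq_on_unit_sphere: "norm x = 1 \<Longrightarrow> rext f x = f x"
  by (simp add: rext_def)

lemma normalize_in_S2: "x \<noteq> 0 \<Longrightarrow> x /\<^sub>R norm x \<in> S2"
  by (simp add: S2_def)

lemma rext_in_S2: "f ` S2 \<subseteq> S2 \<Longrightarrow> x \<noteq> 0 \<Longrightarrow> rext f x \<in> S2"
  using normalize_in_S2 by (auto simp: rext_def)

lemma rext_precompose_rot_z:
  assumes "\<forall>y\<in>S2. a y = g (rot_z t *v y)" "x \<noteq> 0"
  shows "rext a x = rext g (rot_z t *v x)"
  using assms normalize_in_S2 by (simp add: rext_def matrix_vector_mult_scaleR)

lemma rext_postcompose_rot_z:
  assumes "\<forall>y\<in>S2. b y = rot_z t *v g y" "x \<noteq> 0"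
  shows "rext b x = rot_z t *v rext g x"
  using assms normalize_in_S2 by (simp add: rext_def)

lemma has_derivative_rot_z: "((\<lambda>x. rot_z t *v x) has_derivative (\<lambda>x. rot_z t *v x)) F"
  by (simp add: bounded_linear_imp_has_derivative)

lemma has_derivative_rext_precompose_rot_z:
  assumes a: "\<forall>y\<in>S2. a y = g (rot_z t *v y)" and p: "p \<noteq> 0" "rot_z t *v p = p"
    and L: "(rext g has_derivative L) (at p)"
  shows "(rext a has_derivative (\<lambda>h. L (rot_z t *v h))) (at p)"
proof -
  have "((\<lambda>x. rext g (rot_z t *v x)) has_derivative (\<lambda>h. L (rot_z t *v h))) (at p)"
    using has_derivative_compose[OF has_derivative_rot_z, of "rext g" L] L p by simp
  then show ?thesis
    using has_derivative_transform_within_open[of _ _ p UNIV "- {0}" "rext a"]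
      rext_precompose_rot_z[OF a] p by auto
qed

lemma has_derivative_rext_postcompose_rot_z:
  assumes b: "\<forall>y\<in>S2. b y = rot_z t *v g y" and p: "p \<noteq> 0"
    and L: "(rext g has_derivative L) (at p)"
  shows "(rext b has_derivative (\<lambda>h. rot_z t *v L h)) (at p)"
proof -
  have "((\<lambda>x. rot_z t *v rext g x) has_derivative (\<lambda>h. rot_z t *v L h)) (at p)"
    using has_derivative_compose[OF L has_derivative_rot_z] .
  then show ?thesis
    using has_derivative_transform_within_open[of _ _ p UNIV "- {0}" "rext b"]
      rext_postcompose_rot_z[OF b] p by auto
qed

lemma has_derivative_imp_norm_quotient_tendsto:
  fixes f :: "'a::real_normed_vector \<Rightarrow> 'b::real_normed_vector"
  assumes f: "(f has_derivative F) (at p)"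
  shows "((\<lambda>\<tau>::real. norm (f (p + \<tau> *\<^sub>R u) - f p) / \<tau>) \<longlongrightarrow> norm (F u)) (at_right 0)"
proof -
  have "((\<lambda>\<tau>::real. p + \<tau> *\<^sub>R u) has_derivative (\<lambda>\<tau>. \<tau> *\<^sub>R u)) (at 0 within {0<..})"
    by (auto intro!: derivative_eq_intros)
  from has_derivative_compose[OF this, of f F]
  have "((\<lambda>\<tau>. f (p + \<tau> *\<^sub>R u)) has_derivative (\<lambda>\<tau>. \<tau> *\<^sub>R F u)) (at 0 within {0<..})"
    using f linear_cmul[OF has_derivative_linear[OF f]] by simp
  then have "((\<lambda>\<tau>. ((f (p + \<tau> *\<^sub>R u) - f p) - \<tau> *\<^sub>R F u) /\<^sub>R norm \<tau> + F u) \<longlongrightarrow> 0 + F u)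
      (at_right 0)"
    unfolding has_derivative_at_within by (intro tendsto_add tendsto_const) simp
  moreover have "\<forall>\<^sub>F \<tau> in at_right 0. ((f (p + \<tau> *\<^sub>R u) - f p) - \<tau> *\<^sub>R F u) /\<^sub>R norm \<tau> + F u
      = (f (p + \<tau> *\<^sub>R u) - f p) /\<^sub>R \<tau>"
    by (rule eventually_mono[OF eventually_at_right_less]) (simp add: scaleR_diff_right)
  ultimately have "((\<lambda>\<tau>. (f (p + \<tau> *\<^sub>R u) - f p) /\<^sub>R \<tau>) \<longlongrightarrow> F u) (at_right 0)"
    by (simp add: tendsto_cong)
  then have "((\<lambda>\<tau>. norm ((f (p + \<tau> *\<^sub>R u) - f p) /\<^sub>R \<tau>)) \<longlongrightarrow> norm (F u)) (at_right 0)"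
    by (rule tendsto_norm)
  moreover have "\<forall>\<^sub>F \<tau> in at_right 0. norm ((f (p + \<tau> *\<^sub>R u) - f p) /\<^sub>R \<tau>)
      = norm (f (p + \<tau> *\<^sub>R u) - f p) / (\<tau>::real)"
    by (rule eventually_mono[OF eventually_at_right_less]) (simp add: divide_inverse mult.commute)
  ultimately show ?thesis by (simp add: tendsto_cong)
qed

lemma opposite_signs_if_quotients_tendsto:
  fixes f g :: "real \<Rightarrow> real"
  assumes "((\<lambda>\<tau>. f \<tau> / \<tau>) \<longlongrightarrow> c) (at_right 0)" "((\<lambda>\<tau>. g \<tau> / \<tau>) \<longlongrightarrow> d) (at_right 0)"
    and "c * d < 0"
  shows "\<exists>\<tau>>0. f \<tau> * g \<tau> < 0"
proof -
  have "((\<lambda>\<tau>. (f \<tau> / \<tau>) * (g \<tau> / \<tau>)) \<longlongrightarrow> c * d) (at_right 0)"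
    using assms(1,2) by (rule tendsto_mult)
  then have "\<forall>\<^sub>F \<tau> in at_right 0. (f \<tau> / \<tau>) * (g \<tau> / \<tau>) < 0"
    using assms(3) by (rule order_tendstoD(2))
  then have "\<forall>\<^sub>F \<tau> in at_right 0. 0 < \<tau> \<and> (f \<tau> / \<tau>) * (g \<tau> / \<tau>) < 0"
    using eventually_at_right_less by (rule eventually_conj[rotated])
  then obtain \<tau> where \<tau>: "0 < \<tau>" "(f \<tau> / \<tau>) * (g \<tau> / \<tau>) < 0"
    using eventually_happens trivial_limit_at_right_real by blast
  then have "f \<tau> * g \<tau> < 0"
    by (simp add: mult_less_0_iff divide_less_0_iff)
  with \<tau>(1) show ?thesis by blast
qed

lemma IVT_opposite_signs:
  fixes f :: "real \<Rightarrow> real"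
  assumes "a \<le> b" "continuous_on {a..b} f" "f a * f b \<le> 0"
  shows "\<exists>x. a \<le> x \<and> x \<le> b \<and> f x = 0"
proof (cases "f a \<le> 0")
  case True
  with assms(3) have "0 \<le> f b \<or> f a = 0" by (auto simp: mult_le_0_iff)
  then show ?thesis using IVT'[of f a 0 b] True assms(1,2) by auto
next
  case False
  with assms(3) have "f b \<le> 0" by (auto simp: mult_le_0_iff)
  then show ?thesis using IVT2'[of f b 0 a] False assms(1,2) by auto
qed

lemma has_derivative_tangent_to_unit_sphere:
  fixes f :: "'a::real_normed_vector \<Rightarrow> 'b::real_inner"
  assumes f: "(f has_derivative L) (at p)" and S: "open S" "p \<in> S"
    and unit: "\<And>x. x \<in> S \<Longrightarrow> norm (f x) = 1"
  shows "f p \<bullet> L h = 0"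
proof -
  have "((\<lambda>x. f x \<bullet> f x) has_derivative (\<lambda>h. L h \<bullet> f p + f p \<bullet> L h)) (at p)"
    using has_derivative_inner[OF f f] by (simp add: add.commute)
  moreover have "\<And>x. x \<in> S \<Longrightarrow> f x \<bullet> f x = 1"
    using unit by (simp add: norm_eq_1[symmetric])
  ultimately have "((\<lambda>x. 1::real) has_derivative (\<lambda>h. L h \<bullet> f p + f p \<bullet> L h)) (at p)"
    using S by (auto elim!: has_derivative_transform_within_open)
  then have "(\<lambda>h. L h \<bullet> f p + f p \<bullet> L h) = (\<lambda>h. 0)"
    using has_derivative_const by (rule has_derivative_unique)
  then have "L h \<bullet> f p + f p \<bullet> L h = 0" by metis
  then show ?thesis by (simp add: inner_commute)
qed

lemma conformal_at_poleI:
  fixes L :: "real^3 \<Rightarrow> real^3"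
  defines "A \<equiv> L (axis 1 1)" and "B \<equiv> L (axis 2 1)"
  assumes A3: "A$3 = 0" and B3: "B$3 = 0" and norm: "norm A = norm B" and orth: "A \<bullet> B = 0"
    and orient: "A$1 * B$2 - A$2 * B$1 > 0"
  shows "conformal_at_pole L"
proof -
  have n: "(A$1)\<^sup>2 + (A$2)\<^sup>2 = (B$1)\<^sup>2 + (B$2)\<^sup>2"
    using arg_cong[OF norm, of power2] A3 B3 by (simp add: norm_power2_vec3)
  have o: "A$1 * B$1 + A$2 * B$2 = 0" using orth A3 B3 by (simp add: inner_vec3)
  define N where "N = (A$1)\<^sup>2 + (A$2)\<^sup>2"
  \<comment> \<open>Lagrange's identity with \<open>o\<close> forces the determinant to equal \<open>N\<close>, hence \<open>B = (-A\<^sub>2, A\<^sub>1)\<close>.\<close>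
  have "(A$1 * B$2 - A$2 * B$1)\<^sup>2 + (A$1 * B$1 + A$2 * B$2)\<^sup>2 = ((A$1)\<^sup>2 + (A$2)\<^sup>2) * ((B$1)\<^sup>2 + (B$2)\<^sup>2)"
    by (simp add: power2_eq_square algebra_simps)
  then have "(A$1 * B$2 - A$2 * B$1)\<^sup>2 = N\<^sup>2" using o n by (simp add: N_def power2_eq_square)
  then have det_eq_N: "A$1 * B$2 - A$2 * B$1 = N"
    using orient by (simp add: N_def power2_eq_iff_nonneg)
  have "(B$1 + A$2)\<^sup>2 + (B$2 - A$1)\<^sup>2 = (B$1)\<^sup>2 + (B$2)\<^sup>2 + N - 2 * (A$1 * B$2 - A$2 * B$1)"
    by (simp add: N_def power2_eq_square algebra_simps)
  also have "\<dots> = 0" using det_eq_N n by (simp add: N_def)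
  finally have B: "B$1 = - A$2" "B$2 = A$1" by (simp_all add: sum_power2_eq_zero_iff)
  define c where "c = sqrt N"
  have c: "c > 0" "c\<^sup>2 = N" using orient det_eq_N by (simp_all add: c_def)
  have "(A$1 / c)\<^sup>2 + (A$2 / c)\<^sup>2 = N / c\<^sup>2"
    by (simp only: N_def power_divide add_divide_distrib[symmetric])
  then have "(A$1 / c)\<^sup>2 + (A$2 / c)\<^sup>2 = 1" using c by (metis divide_self power_not_zero less_irrefl)
  then obtain \<theta> where "A$1 / c = cos \<theta>" "A$2 / c = sin \<theta>" by (metis sincos_total_2pi)
  then have "A$1 = c * cos \<theta>" "A$2 = c * sin \<theta>" using c by (simp_all add: field_simps)
  then have "A = c *\<^sub>R (cos \<theta> *\<^sub>R axis 1 1 + sin \<theta> *\<^sub>R axis 2 1)"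
    "B = c *\<^sub>R ((- sin \<theta>) *\<^sub>R axis 1 1 + cos \<theta> *\<^sub>R axis 2 1)"
    using A3 B3 B by (simp_all add: vec_eq_iff forall_3 axis_def)
  then show ?thesis using c unfolding conformal_at_pole_def A_def B_def by blast
qed

definition fixes_poles :: "(real^3 \<Rightarrow> real^3) \<Rightarrow> bool" where
  "fixes_poles g \<longleftrightarrow> g south_pole = south_pole \<and> g north_pole = north_pole"

lemma fixes_polesD: "fixes_poles g \<Longrightarrow> p \<in> {south_pole, north_pole} \<Longrightarrow> g p = p"
  by (auto simp: fixes_poles_def)

locale rotation_sharply_3_transitive_group =
  fixes G :: "(real^3 \<Rightarrow> real^3) set"
  assumes diffeomorphisms: "G \<subseteq> Diff1_plus_S2"
    and group: "group_on_S2 G"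
    and sharply_3_transitive: "sharply_3_transitive_S2 G"
    and rotations: "contains_rotations G"
begin

lemma maps_S2: "g \<in> G \<Longrightarrow> x \<in> S2 \<Longrightarrow> g x \<in> S2"
  using diffeomorphisms unfolding Diff1_plus_S2_def C1_S2_def by blast

lemma norm_rext:
  assumes "g \<in> G" "x \<noteq> 0"
  shows "norm (rext g x) = 1"
proof -
  have "rext g x \<in> S2" using assms rext_in_S2 maps_S2 by blast
  then show ?thesis by (simp add: S2_def)
qed

lemma isCont_rext:
  assumes "g \<in> G" "x \<noteq> 0"
  shows "isCont (rext g) x"
proof -
  from assms diffeomorphisms obtain D where "(rext g has_derivative (\<lambda>h. D x *v h)) (at x)"
    unfolding Diff1_plus_S2_def C1_S2_def by blast
  then show ?thesis by (rule has_derivative_continuous)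
qed

lemma orientation_preserving: "g \<in> G \<Longrightarrow> orientation_preserving_S2 g"
  using diffeomorphisms by (auto simp: Diff1_plus_S2_def)

lemma compose_mem: "g \<in> G \<Longrightarrow> h \<in> G \<Longrightarrow> \<exists>k\<in>G. \<forall>x\<in>S2. k x = g (h x)"
  using group by (auto simp: group_on_S2_def)

lemma inverse_mem: "g \<in> G \<Longrightarrow> \<exists>k\<in>G. \<forall>x\<in>S2. k (g x) = x \<and> g (k x) = x"
  using group by (auto simp: group_on_S2_def)

lemma rot_z_mem: "\<exists>r\<in>G. \<forall>x\<in>S2. r x = rot_z t *v x"
  using rotations orthogonal_matrix_rot_z det_rot_z by (auto simp: contains_rotations_def)

lemma precompose_rot_z_mem: "g \<in> G \<Longrightarrow> \<exists>a\<in>G. \<forall>x\<in>S2. a x = g (rot_z t *v x)"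
  using rot_z_mem[of t] compose_mem[of g] by (metis (no_types, lifting))

lemma postcompose_rot_z_mem:
  assumes "g \<in> G"
  shows "\<exists>b\<in>G. \<forall>x\<in>S2. b x = rot_z t *v g x"
proof -
  obtain r where "r \<in> G" "\<forall>x\<in>S2. r x = rot_z t *v x" using rot_z_mem by blast
  with compose_mem[OF _ assms] maps_S2[OF assms] show ?thesis by (metis (no_types, lifting))
qed

lemma eq_id_if_fixes_poles:
  assumes "g \<in> G" "fixes_poles g" "x \<in> S2" "x \<notin> {south_pole, north_pole}" "g x = x" "y \<in> S2"
  shows "g y = y"
proof -
  have "south_pole \<in> S2" "north_pole \<in> S2" using pole_in_S2 by auto
  moreover have "g south_pole = south_pole" "g north_pole = north_pole"
    using assms(2) by (simp_all add: fixes_poles_def)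
  ultimately show ?thesis
    using assms(1,3-6) sharply_3_transitive south_pole_neq_north_pole
    unfolding sharply_3_transitive_S2_def by blast
qed

lemma pole_stabilisers_differ_by_rot_z:
  assumes a: "a \<in> G" "fixes_poles a" and b: "b \<in> G" "fixes_poles b"
    and x: "x \<in> S2" "x \<notin> {south_pole, north_pole}" and height: "(a x)$3 = (b x)$3"
  shows "\<exists>t. \<forall>y\<in>S2. b y = rot_z t *v a y"
proof -
  have "norm (a x) = norm (b x)" using maps_S2 a b x by (simp add: S2_def)
  then obtain t where t: "rot_z t *v a x = b x"
    using rot_z_transitive_on_latitudes height by blast
  obtain r where r: "r \<in> G" "\<forall>y\<in>S2. r y = rot_z t *v a y" using postcompose_rot_z_mem[OF a(1)] by blast
  obtain m where m: "m \<in> G" "\<forall>y\<in>S2. m (b y) = y \<and> b (m y) = y" using inverse_mem[OF b(1)] by blast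
  obtain c where c: "c \<in> G" "\<forall>y\<in>S2. c y = m (r y)" using compose_mem[OF m(1) r(1)] by blast
  have "c p = p" if p: "p \<in> {south_pole, north_pole}" for p
  proof -
    have pS: "p \<in> S2" using pole_in_S2[OF p] .
    have "r p = p" using r(2) pS fixes_polesD[OF a(2) p] rot_z_fixes_pole[OF p] by simp
    moreover have "m p = p" using m(2) pS fixes_polesD[OF b(2) p] by metis
    ultimately show ?thesis using c(2) pS by simp
  qed
  then have "fixes_poles c" by (simp add: fixes_poles_def)
  moreover have "c x = x" using c(2) r(2) m(2) t x(1) by simp
  ultimately have "b y = r y" if "y \<in> S2" for y
    using eq_id_if_fixes_poles[OF c(1) _ x] c(2) m(2) maps_S2[OF r(1) that] that by metis
  then show ?thesis using r(2) by auto
qed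

lemma derivative_at_pole_horizontal:
  assumes g: "g \<in> G" and p: "p \<in> {south_pole, north_pole}" "g p = p"
    and L: "(rext g has_derivative L) (at p)"
  shows "(L h)$3 = 0"
proof -
  have "rext g p \<bullet> L h = 0"
    using has_derivative_tangent_to_unit_sphere[OF L open_Compl[OF closed_singleton]] norm_rext[OF g]
      norm_pole[OF p(1)] by force
  then have "p$3 * (L h)$3 = 0"
    using p pole_coordinates[OF p(1)] rext_eq_on_unit_sphere[OF norm_pole[OF p(1)]]
    by (simp add: inner_vec3)
  then show ?thesis using pole_coordinates(3)[OF p(1)] by auto
qed

lemma derivative_at_pole_positively_oriented:
  assumes g: "g \<in> G" and p: "p \<in> {south_pole, north_pole}" "g p = p"
    and L: "(rext g has_derivative L) (at p)"
  shows "(L (axis 1 1))$1 * (L (axis 2 1))$2 - (L (axis 1 1))$2 * (L (axis 2 1))$1 > 0"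
proof -
  have pS: "p \<in> S2" using pole_in_S2[OF p(1)] .
  have tangent: "axis 1 1 \<bullet> p = 0" "axis 2 1 \<bullet> p = 0"
    using pole_coordinates[OF p(1)] by (simp_all add: inner_vec3 axis_def)
  note det = det_vector_axis_column[OF pole_coordinates(1,2)[OF p(1)]]
  have oriented: "det (vector [g p, L u, L w] :: real^3^3) > 0"
    if "u \<bullet> p = 0" "w \<bullet> p = 0" "det (vector [p, u, w] :: real^3^3) > 0" for u w
    using orientation_preserving[OF g] pS L that unfolding orientation_preserving_S2_def by blast
  \<comment> \<open>\<open>(e\<^sub>1, e\<^sub>2)\<close> is positively oriented at the north pole, \<open>(e\<^sub>2, e\<^sub>1)\<close> at the south pole.\<close>
  from pole_coordinates(3)[OF p(1)] show ?thesis
  proof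
    assume "p$3 = 1"
    then show ?thesis using oriented[of "axis 1 1" "axis 2 1"] tangent p(2) det
      by (simp add: axis_def)
  next
    assume "p$3 = -1"
    then show ?thesis using oriented[of "axis 2 1" "axis 1 1"] tangent p(2) det
      by (simp add: axis_def algebra_simps)
  qed
qed

lemma exists_equal_height_point:
  assumes a: "a \<in> G" "fixes_poles a" and b: "b \<in> G" "fixes_poles b"
    and p: "p \<in> {south_pole, north_pole}"
    and A: "(rext a has_derivative A) (at p)" and B: "(rext b has_derivative B) (at p)"
    and v: "v$3 = 0"
    and signs: "(norm (A v) - norm (B v))
      * (norm (A (rot_z (pi/2) *v v)) - norm (B (rot_z (pi/2) *v v))) < 0"
  shows "\<exists>x\<in>S2. x \<notin> {south_pole, north_pole} \<and> (a x)$3 = (b x)$3"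
proof -
  define \<Phi> where "\<Phi> \<tau> u = norm (rext a (p + \<tau> *\<^sub>R u) - p) - norm (rext b (p + \<tau> *\<^sub>R u) - p)"
    for \<tau> u
  have fixes_p: "rext a p = p" "rext b p = p"
    using a(2) b(2) p rext_eq_on_unit_sphere[OF norm_pole[OF p]] fixes_polesD by auto
  have lim: "((\<lambda>\<tau>. \<Phi> \<tau> u / \<tau>) \<longlongrightarrow> norm (A u) - norm (B u)) (at_right 0)" for u
    using tendsto_diff[OF has_derivative_imp_norm_quotient_tendsto[OF A]
        has_derivative_imp_norm_quotient_tendsto[OF B]]
    by (simp add: \<Phi>_def fixes_p diff_divide_distrib)
  then obtain \<tau> where \<tau>: "\<tau> > 0" "\<Phi> \<tau> v * \<Phi> \<tau> (rot_z (pi/2) *v v) < 0"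
    using opposite_signs_if_quotients_tendsto[OF lim[of v] lim[of "rot_z (pi/2) *v v"] signs] by blast
  define z where "z \<theta> = p + \<tau> *\<^sub>R (rot_z \<theta> *v v)" for \<theta>
  have z_nonzero: "z \<theta> \<noteq> 0" for \<theta>
    using pole_plus_horizontal_nonzero[OF p] v by (simp add: z_def)
  have "z = (\<lambda>\<theta>. p + \<tau> *\<^sub>R (cos \<theta> *\<^sub>R v + sin \<theta> *\<^sub>R (rot_z (pi/2) *v v)))"
    unfolding z_def by (rule ext, subst rot_z_horizontal[OF v], rule refl)
  then have "isCont z \<theta>" for \<theta>
    by (simp add: continuous_intros)
  then have "continuous_on {0..pi/2} (\<lambda>\<theta>. \<Phi> \<tau> (rot_z \<theta> *v v))"
    unfolding \<Phi>_def z_def[symmetric]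
    by (intro continuous_at_imp_continuous_on ballI continuous_intros isCont_o2[OF _ isCont_rext]
        a(1) b(1) z_nonzero)
  moreover have "\<Phi> \<tau> (rot_z 0 *v v) * \<Phi> \<tau> (rot_z (pi/2) *v v) \<le> 0"
    using \<tau>(2) by (simp add: rot_z_0)
  ultimately obtain \<theta> where "\<Phi> \<tau> (rot_z \<theta> *v v) = 0"
    using IVT_opposite_signs[of 0 "pi/2"] by auto
  then have equidistant: "norm (rext a (z \<theta>) - p) = norm (rext b (z \<theta>) - p)"
    by (simp add: \<Phi>_def z_def)
  define x where "x = z \<theta> /\<^sub>R norm (z \<theta>)"
  have x: "x \<in> S2" "rext a (z \<theta>) = a x" "rext b (z \<theta>) = b x"
    using normalize_in_S2[OF z_nonzero] by (simp_all add: x_def rext_def)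
  have "v \<noteq> 0"
    using signs linear_0[OF has_derivative_linear[OF A]] linear_0[OF has_derivative_linear[OF B]]
    by auto
  then have "\<tau> *\<^sub>R (rot_z \<theta> *v v) \<noteq> 0" using \<tau>(1) by (metis norm_eq_zero norm_rot_z scaleR_eq_0_iff
      less_irrefl)
  then have "x \<notin> {south_pole, north_pole}"
    using normalize_pole_plus_horizontal_not_pole[OF p] v by (simp add: x_def z_def)
  moreover have "(a x)$3 = (b x)$3"
    using height_eq_if_equidistant_from_pole[OF p maps_S2[OF a(1) x(1)] maps_S2[OF b(1) x(1)]]
      equidistant x by simp
  ultimately show ?thesis using x(1) by blast
qed

lemma norm_derivative_at_pole_quarter_turn:
  assumes g: "g \<in> G" "fixes_poles g" and p: "p \<in> {south_pole, north_pole}"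
    and L: "(rext g has_derivative L) (at p)" and v: "v$3 = 0"
  shows "norm (L (rot_z (pi/2) *v v)) = norm (L v)"
proof (rule ccontr)
  define R where "R = rot_z (pi/2)"
  assume ne: "norm (L (rot_z (pi/2) *v v)) \<noteq> norm (L v)"
  have p0: "p \<noteq> 0" using norm_pole[OF p] by auto
  obtain a where a: "a \<in> G" "\<forall>x\<in>S2. a x = g (R *v x)"
    using precompose_rot_z_mem[OF g(1)] unfolding R_def by blast
  obtain b where b: "b \<in> G" "\<forall>x\<in>S2. b x = R *v g x"
    using postcompose_rot_z_mem[OF g(1)] unfolding R_def by blast
  have "fixes_poles a" "fixes_poles b"
    using a(2) b(2) g(2) pole_in_S2 rot_z_fixes_pole unfolding fixes_poles_def R_def by simp_all
  moreover have A: "(rext a has_derivative (\<lambda>h. L (R *v h))) (at p)"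
    using has_derivative_rext_precompose_rot_z[OF a(2)[unfolded R_def] p0 rot_z_fixes_pole[OF p] L]
    by (simp add: R_def)
  moreover have B: "(rext b has_derivative (\<lambda>h. R *v L h)) (at p)"
    using has_derivative_rext_postcompose_rot_z[OF b(2)[unfolded R_def] p0 L] by (simp add: R_def)
  moreover have "norm (L (R *v (R *v v))) = norm (L v)"
    using rot_z_quarter_turn_twice[OF v] linear_neg[OF has_derivative_linear[OF L]] by (simp add: R_def)
  then have "(norm (L (R *v v)) - norm (R *v L v)) * (norm (L (R *v (R *v v))) - norm (R *v L (R *v v))) < 0"
    using ne by (simp add: R_def mult_less_0_iff) linarith
  ultimately obtain x where "x \<in> S2" "x \<notin> {south_pole, north_pole}" "(a x)$3 = (b x)$3"
    using exists_equal_height_point a(1) b(1) p v by (metis R_def)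
  then obtain t where t: "\<forall>y\<in>S2. b y = rot_z t *v a y"
    using pole_stabilisers_differ_by_rot_z a(1) b(1) \<open>fixes_poles a\<close> \<open>fixes_poles b\<close> by blast
  have "(\<lambda>h. R *v L h) = (\<lambda>h. rot_z t *v L (R *v h))"
    using has_derivative_unique[OF B has_derivative_rext_postcompose_rot_z[OF t p0 A]] .
  then have "norm (L v) = norm (L (R *v v))" by (metis norm_rot_z R_def)
  then show False using ne by (simp add: R_def)
qed

lemma conformal_derivative_at_pole:
  assumes g: "g \<in> G" "fixes_poles g" and p: "p \<in> {south_pole, north_pole}"
    and L: "(rext g has_derivative L) (at p)"
  shows "conformal_at_pole L"
proof -
  define e1 e2 :: "real^3" where "e1 = axis 1 1" and "e2 = axis 2 1"
  have gp: "g p = p" using fixes_polesD[OF g(2) p] .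
  have lin: "linear L" using has_derivative_linear[OF L] .
  have "rot_z (pi/2) *v e1 = e2" "rot_z (pi/2) *v (e1 + e2) = e2 - e1"
    by (simp_all add: vec_eq_iff forall_3 e1_def e2_def axis_def)
  then have "norm (L e2) = norm (L e1)" "norm (L e2 - L e1) = norm (L e1 + L e2)"
    using norm_derivative_at_pole_quarter_turn[OF g p L, of e1]
      norm_derivative_at_pole_quarter_turn[OF g p L, of "e1 + e2"]
    by (simp_all add: e1_def e2_def axis_def linear_add[OF lin] linear_diff[OF lin])
  moreover have "L e1 \<bullet> L e2 = 0"
    using arg_cong[OF calculation(2), of power2]
    by (simp add: power2_norm_eq_inner inner_add inner_diff inner_commute)
  ultimately show ?thesis
    using conformal_at_poleI[of L] derivative_at_pole_horizontal[OF g(1) p gp L]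
      derivative_at_pole_positively_oriented[OF g(1) p gp L]
    unfolding e1_def e2_def by simp
qed

end

theorem mainTheorem17:
  fixes G :: "(real^3 \<Rightarrow> real^3) set"
  assumes "G \<subseteq> Diff1_plus_S2"
    and "group_on_S2 G"
    and "sharply_3_transitive_S2 G"
    and "contains_rotations G"
  shows "\<forall>g\<in>G. g south_pole = south_pole \<and> g north_pole = north_pole \<longrightarrow>
           (\<forall>p\<in>{south_pole, north_pole}. \<forall>L.
              (rext g has_derivative L) (at p) \<longrightarrow> conformal_at_pole L)"
proof -
  interpret rotation_sharply_3_transitive_group G
    using assms by unfold_locales
  show ?thesis
    using conformal_derivative_at_pole unfolding fixes_poles_def by blast
qed

end
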